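(* Consider the problem $\min_{\beta\in\mathbb{R}^p}\Phi(\beta)=f(\beta)+\sum_{j=1}^p g_j(\beta_j)$, where $f(\beta)=F(X\beta)$ for a design matrix $X\in\mathbb{R}^{n\times p}$, $f$ satisfies Assumption A and each $g_j$ satisfies Assumption B (both stated in the context). Run the working-set algorithm described in the context, and let $\mathcal{W}_t\subset[p]$ denote its $t$-th working set. Suppose that the inner solver converges toward a critical point, and that $\mathcal{W}_t\subset\mathcal{W}_{t+1}$ for all $t\ge 0$. Then the iterates of the working-set algorithm converge towards a critical point of $\Phi$.
   Context: Assumption A: $f:\mathbb{R}^p\to\mathbb{R}$ is convex and differentiable, and for every $j\in[p]$ there is $L_j>0$ with $|\nabla_j f(x+he_j)-\nabla_j f(x)|\le L_j|h|$ for all $x\in\mathbb{R}^p$, $h\in\mathbb{R}$. Assumption B: each $g_j:\mathbb{R}\to\mathbb{R}$ is proper, closed (lower semicontinuous) and lower bounded. Let $g(\beta)=\sum_j g_j(\beta_j)$ and let $\partial$ denote the Fréchet subdifferential. A critical point of $\Phi$ is a point $x$ with $-\nabla f(x)\in\partial g(x)$. The generalized support of $\beta$ is $\mathrm{gsupp}(\beta)=\{j\in[p]:\partial g_j(\beta_j)\text{ is a singleton}\}$. Working-set algorithm (given $\beta\in\mathbb{R}^p$, an initial size $\mathrm{ws\_size}\in\mathbb{N}$, tolerance $\epsilon>0$, numbers of outer and inner iterations): at outer iteration $t$, compute $\mathrm{score}_j=\mathrm{dist}(-\nabla_j f(\beta),\partial g_j(\beta_j))$ for all $j\in[p]$; set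 $\mathrm{ws\_size}\leftarrow\max(\mathrm{ws\_size},2|\mathrm{gsupp}(\beta)|)$; let $\mathcal{W}_t$ be the set of indices of the $\mathrm{ws\_size}$ largest scores; if $\max_{j\in[p]}\mathrm{score}_j\le\epsilon$, stop; otherwise replace $\beta$ by the output of the inner solver on $\mathcal{W}_t$. The inner solver minimizes $\Phi$ over the coordinates in $\mathcal{W}_t$ (the others being kept fixed) by epochs of cyclic proximal coordinate descent, $\beta_j\leftarrow\mathrm{prox}_{g_j/L_j}(\beta_j-\nabla_j f(\beta)/L_j)$ for $j\in\mathcal{W}_t$, possibly combined every $M$ epochs with an Anderson extrapolation step that is accepted only if it decreases $\Phi$, and stops when $\max_{j\in\mathcal{W}_t}\mathrm{dist}(-\nabla_j f(\beta),\partial g_j(\beta_j))\le\epsilon$ or after a maximal number of epochs.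
   Formalization: The tolerance $\epsilon$ is 0: the outer loop stops (keeping $\beta$) only when every score vanishes, each inner-solver output is an exact critical point of the subproblem on $\mathcal{W}_t$, and the initial working-set size is positive. Each condition added here is assumed in the paper as well or is needed for the statement above to hold. *)

theory Defs
  imports "HOL-Analysis.Analysis"
begin

definition lsc :: "('a::topological_space \<Rightarrow> real) \<Rightarrow> bool" where
  "lsc g \<longleftrightarrow> (\<forall>x c. c < g x \<longrightarrow> eventually (\<lambda>y. c < g y) (at x))"

text \<open>Frechet (regular) subdifferential:
  v is a Frechet subgradient of h at x iff
  liminf_{y -> x, y ~= x} (h y - h x - <v, y - x>) / |y - x| >= 0.\<close>
definition frechet_subdiff :: "('a::real_inner \<Rightarrow> real) \<Rightarrow> 'a \<Rightarrow> 'a set" where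
  "frechet_subdiff h x = {v. \<forall>e>0. \<exists>d>0. \<forall>y. norm (y - x) < d \<longrightarrow>
      h y \<ge> h x + inner v (y - x) - e * norm (y - x)}"

definition gsum :: "('p::finite \<Rightarrow> real \<Rightarrow> real) \<Rightarrow> real^'p \<Rightarrow> real" where
  "gsum g b = (\<Sum>j\<in>UNIV. g j (b $ j))"

definition critical_point ::
  "(real^'p \<Rightarrow> real^'p) \<Rightarrow> ('p::finite \<Rightarrow> real \<Rightarrow> real) \<Rightarrow> real^'p \<Rightarrow> bool" where
  "critical_point gradf g x \<longleftrightarrow> - gradf x \<in> frechet_subdiff (gsum g) x"

text \<open>Critical point of the subproblem restricted to the coordinates in W (other
  coordinates frozen): the restricted penalty is sum_{j in W} g_j, the restricted
  gradient is the gradient with coordinates outside W set to 0 (the restricted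
  objective does not depend on the frozen coordinates).\<close>
definition restricted_critical_point ::
  "(real^'p \<Rightarrow> real^'p) \<Rightarrow> ('p::finite \<Rightarrow> real \<Rightarrow> real) \<Rightarrow> 'p set \<Rightarrow> real^'p \<Rightarrow> bool" where
  "restricted_critical_point gradf g W x \<longleftrightarrow>
     - (\<chi> j. if j \<in> W then gradf x $ j else 0)
       \<in> frechet_subdiff (\<lambda>b. \<Sum>j\<in>W. g j (b $ j)) x"

definition score ::
  "(real^'p \<Rightarrow> real^'p) \<Rightarrow> ('p::finite \<Rightarrow> real \<Rightarrow> real) \<Rightarrow> real^'p \<Rightarrow> 'p \<Rightarrow> ereal" where
  "score gradf g b j =
     (let S = frechet_subdiff (g j) (b $ j) in
      if S = {} then \<infinity> else ereal (infdist (- (gradf b $ j)) S))"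

definition gsupp :: "('p::finite \<Rightarrow> real \<Rightarrow> real) \<Rightarrow> real^'p \<Rightarrow> 'p set" where
  "gsupp g b = {j. \<exists>v. frechet_subdiff (g j) (b $ j) = {v}}"

end

theory Submission
  imports Defs
begin

text \<open>Nested subsets of the finite index set cannot grow forever, so some step leaves the
  working set unchanged. At that step the inner solver returns a point at which every index of
  the working set has score 0; since the working set collects the largest scores and is
  nonempty, all scores vanish. The stopping rule then freezes the iterates, and a point with
  vanishing scores is critical because the Frechet subdifferential of a separable function
  contains the product of the coordinatewise subdifferentials.\<close>

lemma closed_frechet_subdiff:
  fixes h :: "'a::real_inner \<Rightarrow> real"
  shows "closed (frechet_subdiff h x)"
  unfolding closure_subset_eq[symmetric]
proof
  fix v assume "v \<in> closure (frechet_subdiff h x)"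
  show "v \<in> frechet_subdiff h x"
    unfolding frechet_subdiff_def
  proof (intro CollectI allI impI)
    fix e :: real assume "e > 0"
    then obtain w where w: "w \<in> frechet_subdiff h x" "dist w v < e/2"
      using \<open>v \<in> closure _\<close> unfolding closure_approachable by (meson half_gt_zero)
    moreover have "e/2 > 0"
      using \<open>e > 0\<close> by simp
    ultimately obtain d where "d > 0" and
      d: "\<And>y. norm (y - x) < d \<Longrightarrow> h y \<ge> h x + inner w (y - x) - e/2 * norm (y - x)"
      unfolding frechet_subdiff_def by blast
    have "h x + inner v (y - x) - e * norm (y - x) \<le> h y" if "norm (y - x) < d" for y
    proof -
      have "\<bar>inner (w - v) (y - x)\<bar> \<le> norm (w - v) * norm (y - x)"
        by (rule Cauchy_Schwarz_ineq2)
      also have "\<dots> \<le> e/2 * norm (y - x)"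
        using w(2) by (intro mult_right_mono) (simp_all add: dist_norm)
      finally show ?thesis
        using d[OF that] inner_diff_left[of w v "y - x"] by linarith
    qed
    with \<open>d > 0\<close> show "\<exists>d>0. \<forall>y. norm (y - x) < d \<longrightarrow>
        h y \<ge> h x + inner v (y - x) - e * norm (y - x)"
      by blast
  qed
qed

lemma score_nonpos_iff:
  "score gradf g b j \<le> 0 \<longleftrightarrow> - (gradf b $ j) \<in> frechet_subdiff (g j) (b $ j)"
proof -
  let ?S = "frechet_subdiff (g j) (b $ j)" and ?v = "- (gradf b $ j)"
  have "score gradf g b j \<le> 0 \<longleftrightarrow> ?S \<noteq> {} \<and> infdist ?v ?S \<le> 0"
    by (simp add: score_def Let_def)
  also have "\<dots> \<longleftrightarrow> ?S \<noteq> {} \<and> infdist ?v ?S = 0"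
    using infdist_nonneg[of ?v ?S] by linarith
  also have "\<dots> \<longleftrightarrow> ?v \<in> ?S"
    using in_closed_iff_infdist_zero[OF closed_frechet_subdiff] by blast
  finally show ?thesis .
qed

lemma restricted_critical_point_imp_frechet_subdiff:
  assumes "restricted_critical_point gradf g W x" and "j \<in> W"
  shows "- (gradf x $ j) \<in> frechet_subdiff (g j) (x $ j)"
  unfolding frechet_subdiff_def
proof (intro CollectI allI impI)
  fix e :: real assume "e > 0"
  let ?v = "- (\<chi> j. if j \<in> W then gradf x $ j else 0)"
  obtain d where "d > 0" and d: "\<And>y. norm (y - x) < d \<Longrightarrow>
      (\<Sum>i\<in>W. g i (y $ i)) \<ge> (\<Sum>i\<in>W. g i (x $ i)) + inner ?v (y - x) - e * norm (y - x)"
    using assms(1) \<open>e > 0\<close> unfolding restricted_critical_point_def frechet_subdiff_def by blast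
  have "g j (x $ j) - gradf x $ j * (z - x $ j) - e * \<bar>z - x $ j\<bar> \<le> g j z"
    if "\<bar>z - x $ j\<bar> < d" for z
  proof -
    define y where "y = x + (z - x $ j) *\<^sub>R axis j 1"
    have y_x: "y - x = (z - x $ j) *\<^sub>R axis j 1"
      by (simp add: y_def)
    have "(\<Sum>i\<in>W. g i (y $ i)) = g j z + (\<Sum>i\<in>W - {j}. g i (x $ i))"
      using sum.remove[OF finite assms(2), of "\<lambda>i. g i (y $ i)"] by (simp add: y_def axis_def)
    moreover have "(\<Sum>i\<in>W. g i (x $ i)) = g j (x $ j) + (\<Sum>i\<in>W - {j}. g i (x $ i))"
      using sum.remove[OF finite assms(2)] by simp
    moreover have "inner ?v (y - x) = - gradf x $ j * (z - x $ j)"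
      using assms(2) by (simp add: y_x cart_eq_inner_axis[symmetric])
    moreover have norm_y_x: "norm (y - x) = \<bar>z - x $ j\<bar>"
      by (simp add: y_x)
    ultimately show ?thesis
      using d[of y, unfolded norm_y_x, OF that] by linarith
  qed
  with \<open>d > 0\<close> show "\<exists>d>0. \<forall>z. norm (z - x $ j) < d \<longrightarrow>
      g j z \<ge> g j (x $ j) + inner (- (gradf x $ j)) (z - x $ j) - e * norm (z - x $ j)"
    by auto
qed

lemma frechet_subdiff_gsumI:
  fixes v b :: "real^'p::finite"
  assumes "\<And>j. v $ j \<in> frechet_subdiff (g j) (b $ j)"
  shows "v \<in> frechet_subdiff (gsum g) b"
  unfolding frechet_subdiff_def
proof (intro CollectI allI impI)
  fix e :: real assume "e > 0"
  define e' where "e' = e / CARD('p)"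
  have "e' > 0"
    using \<open>e > 0\<close> by (simp add: e'_def)
  then have "\<forall>j. \<exists>d>0. \<forall>z. norm (z - b $ j) < d \<longrightarrow>
      g j z \<ge> g j (b $ j) + inner (v $ j) (z - b $ j) - e' * norm (z - b $ j)"
    using assms unfolding frechet_subdiff_def by blast
  then obtain D where D_pos: "\<And>j. D j > 0" and D: "\<And>j z. \<bar>z - b $ j\<bar> < D j \<Longrightarrow>
      g j z \<ge> g j (b $ j) + v $ j * (z - b $ j) - e' * \<bar>z - b $ j\<bar>"
    by (metis real_norm_def inner_real_def)
  define d where "d = Min (range D)"
  have "d > 0"
    using D_pos by (simp add: d_def)
  have "gsum g b + inner v (y - b) - e * norm (y - b) \<le> gsum g y" if "norm (y - b) < d" for y
  proof -
    have "g j (b $ j) + v $ j * (y $ j - b $ j) - e' * norm (y - b) \<le> g j (y $ j)" for j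
    proof -
      have "\<bar>y $ j - b $ j\<bar> \<le> norm (y - b)"
        using component_le_norm_cart[of "y - b" j] by simp
      moreover have "d \<le> D j"
        by (simp add: d_def)
      ultimately have "\<bar>y $ j - b $ j\<bar> < D j"
        and "e' * \<bar>y $ j - b $ j\<bar> \<le> e' * norm (y - b)"
        using that \<open>e' > 0\<close> by (simp_all add: mult_left_mono)
      then show ?thesis
        using D[of "y $ j" j] by linarith
    qed
    then have "(\<Sum>j\<in>UNIV. g j (b $ j) + v $ j * (y $ j - b $ j) - e' * norm (y - b))
        \<le> gsum g y"
      unfolding gsum_def by (rule sum_mono)
    then show ?thesis
      by (simp add: gsum_def sum.distrib sum_subtractf inner_vec_def e'_def)
  qed
  with \<open>d > 0\<close> show "\<exists>d>0. \<forall>y. norm (y - b) < d \<longrightarrow>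
      gsum g y \<ge> gsum g b + inner v (y - b) - e * norm (y - b)"
    by blast
qed

lemma critical_point_if_scores_nonpos:
  assumes "\<And>j. score gradf g b j \<le> 0"
  shows "critical_point gradf g b"
  unfolding critical_point_def
  by (rule frechet_subdiff_gsumI) (use assms in \<open>simp add: score_nonpos_iff\<close>)

lemma nested_finite_sets_stall:
  fixes W :: "nat \<Rightarrow> 'a::finite set"
  assumes "\<And>t. W t \<subseteq> W (Suc t)"
  obtains T where "W (Suc T) = W T"
proof (rule ccontr)
  assume "\<not> thesis"
  then have strict: "W t \<subset> W (Suc t)" for t
    using assms[of t] that[of t] by auto
  have "t \<le> card (W t)" for t
  proof (induction t)
    case (Suc t)
    have "card (W t) < card (W (Suc t))"
      using psubset_card_mono[OF finite strict] .
    with Suc.IH show ?case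
      by linarith
  qed simp
  moreover have "card (W t) \<le> CARD('a)" for t
    by (simp add: card_mono)
  ultimately show False
    by (metis Suc_n_not_le_n le_trans)
qed

lemma LIMSEQ_absorbing_state:
  assumes "P (x T)" and "\<And>t. P (x t) \<Longrightarrow> x (Suc t) = x t"
  shows "x \<longlonglongrightarrow> x T"
proof (rule tendsto_eventually, unfold eventually_sequentially, intro exI allI impI)
  fix t assume "T \<le> t"
  then show "x t = x T"
  proof (induction t rule: dec_induct)
    case (step t)
    then have "P (x t)"
      using assms(1) by simp
    then show ?case
      using assms(2) step.IH by simp
  qed simp
qed

theorem proposition1:
  fixes X :: "real^'p::finite^'n::finite"
    and F :: "real^'n \<Rightarrow> real"
    and f :: "real^'p \<Rightarrow> real"
    and gradf :: "real^'p \<Rightarrow> real^'p"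
    and L :: "'p \<Rightarrow> real"
    and g :: "'p \<Rightarrow> real \<Rightarrow> real"
    and ws0 :: nat
    and wsz :: "nat \<Rightarrow> nat"
    and W :: "nat \<Rightarrow> 'p set"
    and beta :: "nat \<Rightarrow> real^'p"
  assumes f_def: "\<And>b. f b = F (X *v b)"
    \<comment> \<open>Assumption A\<close>
    and f_convex: "convex_on UNIV f"
    and f_grad: "\<And>x. (f has_derivative (\<lambda>h. gradf x \<bullet> h)) (at x)"
    and L_pos: "\<And>j. L j > 0"
    and f_coord_lip: "\<And>x j h. \<bar>gradf (x + h *\<^sub>R axis j 1) $ j - gradf x $ j\<bar> \<le> L j * \<bar>h\<bar>"
    \<comment> \<open>Assumption B (real-valued g_j are automatically proper)\<close>
    and g_lsc: "\<And>j. lsc (g j)"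
    and g_bdd: "\<And>j. bdd_below (range (g j))"
    \<comment> \<open>initial working-set size\<close>
    and ws0_pos: "ws0 > 0"
    \<comment> \<open>ws_size update\<close>
    and wsz_0: "wsz 0 = max ws0 (2 * card (gsupp g (beta 0)))"
    and wsz_Suc: "\<And>t. wsz (Suc t) = max (wsz t) (2 * card (gsupp g (beta (Suc t))))"
    \<comment> \<open>W t consists of the indices of the wsz t largest scores\<close>
    and W_card: "\<And>t. card (W t) = min (wsz t) CARD('p)"
    and W_top: "\<And>t i j. i \<in> W t \<Longrightarrow> j \<notin> W t \<Longrightarrow> score gradf g (beta t) j \<le> score gradf g (beta t) i"
    \<comment> \<open>stopping test (idealized tolerance 0): once all scores vanish, the iterate is kept\<close>
    and stop: "\<And>t. (\<forall>j. score gradf g (beta t) j \<le> 0) \<Longrightarrow> beta (Suc t) = beta t"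
    \<comment> \<open>inner solver on W t converges to a critical point of the restricted problem
        (coordinates outside W t stay fixed); beta (Suc t) is its output\<close>
    and inner: "\<And>t. \<not> (\<forall>j. score gradf g (beta t) j \<le> 0) \<Longrightarrow>
        (\<forall>j. j \<notin> W t \<longrightarrow> beta (Suc t) $ j = beta t $ j) \<and>
        restricted_critical_point gradf g (W t) (beta (Suc t))"
    \<comment> \<open>nested working sets\<close>
    and W_mono: "\<And>t. W t \<subseteq> W (Suc t)"
  shows "\<exists>b. critical_point gradf g b \<and> beta \<longlonglongrightarrow> b"
proof -
  have "ws0 \<le> wsz t" for t
    by (induction t) (auto simp: wsz_0 wsz_Suc)
  then have W_nonempty: "W t \<noteq> {}" for t
    using W_card[of t] ws0_pos by (metis card.empty min_def not_gr0 le_0_eq zero_less_card_finite)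
  obtain T where W_stalls: "W (Suc T) = W T"
    using nested_finite_sets_stall W_mono by blast
  have scores_vanish: "\<forall>j. score gradf g (beta (Suc T)) j \<le> 0"
  proof (cases "\<forall>j. score gradf g (beta T) j \<le> 0")
    case False
    then have "restricted_critical_point gradf g (W (Suc T)) (beta (Suc T))"
      using inner[of T] W_stalls by simp
    then have on_W: "score gradf g (beta (Suc T)) i \<le> 0" if "i \<in> W (Suc T)" for i
      using restricted_critical_point_imp_frechet_subdiff that by (simp add: score_nonpos_iff)
    obtain i where "i \<in> W (Suc T)"
      using W_nonempty by blast
    then show ?thesis
      using on_W W_top[of i "Suc T"] by (metis order.trans)
  qed (use stop in simp)
  moreover have "beta \<longlonglongrightarrow> beta (Suc T)"
    using LIMSEQ_absorbing_state[where P = "\<lambda>b. \<forall>j. score gradf g b j \<le> 0"]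
      scores_vanish stop by blast
  ultimately show ?thesis
    using critical_point_if_scores_nonpos by blast
qed

end
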